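(* Let $\mathcal G=\prod_{i=1}^n\mathcal G^i:\prod_i[k_i]\to\mathbb{R}^n$ be a grid with controlling constant $c$ and let $\delta<c/2$. Then $\mathsf M^{\mathcal G}_\delta$ is a well-defined endofunctor of the category of finitely presented $n$-parameter persistence modules: the module $\mathsf M^{\mathcal G}_\delta(M)$ does not depend (up to isomorphism) on the chosen presentation of $M$, and the induced morphism $\mathsf M^{\mathcal G}_\delta(f)$ is well defined for every morphism $f$.
   Context: Modules are $\mathbb{R}^n$-graded modules over $P_n$ (monoid ring over a field of $([0,\infty)^n,+)$, monomials $\vec x^{\vec a}$); a finitely presented module has a presentation $F_1\xrightarrow{p_1}F_0\to M\to0$ with $F_0=\mathrm{Free}[\{\vec b_i\}]$, $F_1=\mathrm{Free}[\{\vec r_l\}]$ finitely generated free. A grid is $\mathcal G=\prod_i\mathcal G^i$ with $\mathcal G^i:[k_i]\to\mathbb{R}$; its controlling constant is $c(\mathcal G)=\min\{\|\vec a-\vec b\|_\infty:\vec a\ne\vec b\in\mathrm{Im}\,\mathcal G\}$. For $\delta<c/2$, the merge function $\mathsf M^{\mathcal G}_\delta:\mathbb{R}^n\to\mathbb{R}^n$ acts coordinatewise by $x\mapsto\mathcal G^i(k)$ if $x\in[\mathcal G^i(k)-\delta,\mathcal G^i(k)+\delta]$ for some $k$, and $x\mapsto x$ otherwise; it is order preserving. On free modules, $\mathsf M^{\mathcal G}_\delta(\mathrm{Free}[\mathcal X])=\mathrm{Free}[\mathsf M^{\mathcal G}_\delta(\mathcal X)]$ (same generators, grades replaced by their merges),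 and a morphism $\vec b\mapsto\sum_j c_j\vec x^{\vec b-\vec b'_j}\vec b'_j$ is sent to $\mathsf M(\vec b)\mapsto\sum_jc_j\vec x^{\mathsf M(\vec b)-\mathsf M(\vec b'_j)}\mathsf M(\vec b'_j)$. For $M$ with presentation $F_1\to F_0\to M$, $\mathsf M^{\mathcal G}_\delta(M)=\mathrm{coker}\,\mathsf M^{\mathcal G}_\delta(F_1\to F_0)$. For $f:M\to N$, choose a lift $f_0:F_0\to G_0$ to presentations, and set $\mathsf M^{\mathcal G}_\delta(f)$ to be the morphism of cokernels induced by $\mathsf M^{\mathcal G}_\delta(f_0)$. *)

theory Defs
  imports "HOL-Analysis.Analysis" "HOL-Library.Extended_Real"
begin

text \<open>A grid G = prod_i G^i with G^i : [k_i] -> R is given by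
  G :: 'n => nat => real (G i = G^i) and K :: 'n => nat (K i = k_i), where
  [k_i] is rendered as the index set {..<K i}.\<close>

definition grid_image :: "('n::finite \<Rightarrow> nat \<Rightarrow> real) \<Rightarrow> ('n \<Rightarrow> nat) \<Rightarrow> (real^'n) set" where
  "grid_image G K = {x. \<forall>i. \<exists>k<K i. x$i = G i k}"

text \<open>Controlling constant: min of sup-norm distances between distinct grid points
  (an ereal, equal to infinity if the grid has a single point).\<close>
definition ctrl_const :: "('n::finite \<Rightarrow> nat \<Rightarrow> real) \<Rightarrow> ('n \<Rightarrow> nat) \<Rightarrow> ereal" where
  "ctrl_const G K = Inf {ereal (infnorm (a - b)) | a b.
       a \<in> grid_image G K \<and> b \<in> grid_image G K \<and> a \<noteq> b}"

definition merge_fun :: "('n::finite \<Rightarrow> nat \<Rightarrow> real) \<Rightarrow> ('n \<Rightarrow> nat) \<Rightarrow> real \<Rightarrow> real^'n \<Rightarrow> real^'n" where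
  "merge_fun G K \<delta> x = (\<chi> i.
     if \<exists>k<K i. G i k - \<delta> \<le> x$i \<and> x$i \<le> G i k + \<delta>
     then G i (SOME k. k < K i \<and> G i k - \<delta> \<le> x$i \<and> x$i \<le> G i k + \<delta>)
     else x$i)"

text \<open>A finite presentation F1 --p1--> F0 over the field 'k:
  F0 = Free[b_0..b_{ng-1}] with b_i = gen_gr i,
  F1 = Free[r_0..r_{nr-1}] with r_l = rel_gr l,
  p1(r_l) = sum_i (pmat i l) x^(r_l - b_i) b_i.\<close>
record ('k, 'n) pres =
  ngen :: nat
  gen_gr :: "nat \<Rightarrow> real^'n"
  nrel :: nat
  rel_gr :: "nat \<Rightarrow> real^'n"
  pmat :: "nat \<Rightarrow> nat \<Rightarrow> 'k"

definition valid_pres :: "('k::field, 'n::finite) pres \<Rightarrow> bool" where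
  "valid_pres P \<longleftrightarrow> (\<forall>i l. pmat P i l \<noteq> 0 \<longrightarrow>
       i < ngen P \<and> l < nrel P \<and> gen_gr P i \<le> rel_gr P l)"

text \<open>Degree-a part of F0, identified with coefficient vectors w.r.t. the basis
  x^(a - b_i) b_i (b_i <= a); the structure maps x^v of a free module are then
  the inclusions.\<close>
definition F0 :: "('k::field, 'n::finite) pres \<Rightarrow> real^'n \<Rightarrow> (nat \<Rightarrow> 'k) set" where
  "F0 P a = {c. \<forall>i. c i \<noteq> 0 \<longrightarrow> i < ngen P \<and> gen_gr P i \<le> a}"

text \<open>Degree-a part of the image of p1.\<close>
definition Rel :: "('k::field, 'n::finite) pres \<Rightarrow> real^'n \<Rightarrow> (nat \<Rightarrow> 'k) set" where
  "Rel P a = {(\<lambda>i. \<Sum>l<nrel P. d l * pmat P i l) | d.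
       \<forall>l. d l \<noteq> 0 \<longrightarrow> l < nrel P \<and> rel_gr P l \<le> a}"

definition cos :: "('k::field, 'n::finite) pres \<Rightarrow> real^'n \<Rightarrow> (nat \<Rightarrow> 'k) \<Rightarrow> (nat \<Rightarrow> 'k) set" where
  "cos P a c = {(\<lambda>i. c i + r i) | r. r \<in> Rel P a}"

text \<open>The degree-a part of the cokernel module M = coker p1.\<close>
definition Mod :: "('k::field, 'n::finite) pres \<Rightarrow> real^'n \<Rightarrow> (nat \<Rightarrow> 'k) set set" where
  "Mod P a = cos P a ` F0 P a"

text \<open>Module operations in degree a and the structure map M_a -> M_a' (a <= a'),
  i.e. multiplication by x^(a'-a).\<close>
definition cadd :: "('k::field, 'n::finite) pres \<Rightarrow> real^'n \<Rightarrow> (nat \<Rightarrow> 'k) set \<Rightarrow> (nat \<Rightarrow> 'k) set \<Rightarrow> (nat \<Rightarrow> 'k) set" where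
  "cadd P a X Y = {(\<lambda>i. x i + y i + r i) | x y r. x \<in> X \<and> y \<in> Y \<and> r \<in> Rel P a}"

definition csmult :: "('k::field, 'n::finite) pres \<Rightarrow> real^'n \<Rightarrow> 'k \<Rightarrow> (nat \<Rightarrow> 'k) set \<Rightarrow> (nat \<Rightarrow> 'k) set" where
  "csmult P a s X = {(\<lambda>i. s * x i + r i) | x r. x \<in> X \<and> r \<in> Rel P a}"

definition cstr :: "('k::field, 'n::finite) pres \<Rightarrow> real^'n \<Rightarrow> (nat \<Rightarrow> 'k) set \<Rightarrow> (nat \<Rightarrow> 'k) set" where
  "cstr P a' X = {(\<lambda>i. x i + r i) | x r. x \<in> X \<and> r \<in> Rel P a'}"

definition pmor :: "('k::field, 'n::finite) pres \<Rightarrow> ('k, 'n) pres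
     \<Rightarrow> (real^'n \<Rightarrow> (nat \<Rightarrow> 'k) set \<Rightarrow> (nat \<Rightarrow> 'k) set) \<Rightarrow> bool" where
  "pmor P Q f \<longleftrightarrow>
     (\<forall>a. \<forall>X\<in>Mod P a. f a X \<in> Mod Q a) \<and>
     (\<forall>a. \<forall>X\<in>Mod P a. \<forall>Y\<in>Mod P a. f a (cadd P a X Y) = cadd Q a (f a X) (f a Y)) \<and>
     (\<forall>a s. \<forall>X\<in>Mod P a. f a (csmult P a s X) = csmult Q a s (f a X)) \<and>
     (\<forall>a a'. a \<le> a' \<longrightarrow> (\<forall>X\<in>Mod P a. f a' (cstr P a' X) = cstr Q a' (f a X)))"

definition mor_eq :: "('k::field, 'n::finite) pres
     \<Rightarrow> (real^'n \<Rightarrow> (nat \<Rightarrow> 'k) set \<Rightarrow> (nat \<Rightarrow> 'k) set)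
     \<Rightarrow> (real^'n \<Rightarrow> (nat \<Rightarrow> 'k) set \<Rightarrow> (nat \<Rightarrow> 'k) set) \<Rightarrow> bool" where
  "mor_eq P f g \<longleftrightarrow> (\<forall>a. \<forall>X\<in>Mod P a. f a X = g a X)"

definition mod_iso :: "('k::field, 'n::finite) pres \<Rightarrow> ('k, 'n) pres \<Rightarrow> bool" where
  "mod_iso P Q \<longleftrightarrow> (\<exists>f g. pmor P Q f \<and> pmor Q P g \<and>
      mor_eq P (\<lambda>a X. g a (f a X)) (\<lambda>a X. X) \<and> mor_eq Q (\<lambda>a X. f a (g a X)) (\<lambda>a X. X))"

text \<open>A morphism F0(P) -> F0(Q) of free modules: b_i |-> sum_j (A j i) x^(b_i - b'_j) b'_j.
  On coefficient vectors in any degree it acts as the matrix A.\<close>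
definition valid_fmap :: "('k::field, 'n::finite) pres \<Rightarrow> ('k, 'n) pres \<Rightarrow> (nat \<Rightarrow> nat \<Rightarrow> 'k) \<Rightarrow> bool" where
  "valid_fmap P Q A \<longleftrightarrow> (\<forall>j i. A j i \<noteq> 0 \<longrightarrow> j < ngen Q \<and> i < ngen P \<and> gen_gr Q j \<le> gen_gr P i)"

definition fapply :: "('k::field, 'n::finite) pres \<Rightarrow> (nat \<Rightarrow> nat \<Rightarrow> 'k) \<Rightarrow> (nat \<Rightarrow> 'k) \<Rightarrow> (nat \<Rightarrow> 'k)" where
  "fapply P A c = (\<lambda>j. \<Sum>i<ngen P. A j i * c i)"

definition is_lift :: "('k::field, 'n::finite) pres \<Rightarrow> ('k, 'n) pres
     \<Rightarrow> (real^'n \<Rightarrow> (nat \<Rightarrow> 'k) set \<Rightarrow> (nat \<Rightarrow> 'k) set) \<Rightarrow> (nat \<Rightarrow> nat \<Rightarrow> 'k) \<Rightarrow> bool" where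
  "is_lift P Q f A \<longleftrightarrow> valid_fmap P Q A \<and>
     (\<forall>a. \<forall>c\<in>F0 P a. f a (cos P a c) = cos Q a (fapply P A c))"

definition induced_by :: "('k::field, 'n::finite) pres \<Rightarrow> ('k, 'n) pres
     \<Rightarrow> (nat \<Rightarrow> nat \<Rightarrow> 'k) \<Rightarrow> (real^'n \<Rightarrow> (nat \<Rightarrow> 'k) set \<Rightarrow> (nat \<Rightarrow> 'k) set) \<Rightarrow> bool" where
  "induced_by P Q A g \<longleftrightarrow> pmor P Q g \<and>
     (\<forall>a. \<forall>c\<in>F0 P a. g a (cos P a c) = cos Q a (fapply P A c))"

text \<open>M_delta(F1 -> F0): same generators and coefficients, grades replaced by their
  merges; the matrix of a free-module map is unchanged.\<close>
definition merge_pres :: "('n::finite \<Rightarrow> nat \<Rightarrow> real) \<Rightarrow> ('n \<Rightarrow> nat) \<Rightarrow> real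
     \<Rightarrow> ('k, 'n) pres \<Rightarrow> ('k, 'n) pres" where
  "merge_pres G K \<delta> P = P\<lparr>gen_gr := merge_fun G K \<delta> \<circ> gen_gr P,
                          rel_gr := merge_fun G K \<delta> \<circ> rel_gr P\<rparr>"

end

theory Submission
  imports Defs
begin

text \<open>Distinct values of one grid coordinate are at least the controlling constant, hence more
  than \<open>2\<delta>\<close>, apart; so every coordinate is snapped to at most one grid value and the merge
  function is monotone. Everything else holds for an arbitrary monotone regrading \<open>m\<close> of
  presentations. A lift \<open>A\<close> of \<open>f : coker P \<rightarrow> coker Q\<close> sends each relation of \<open>P\<close> into the
  relations of \<open>Q\<close> in the same grade; since \<open>m\<close> preserves all grade inequalities, \<open>A\<close> still sends
  relations to relations after regrading and therefore induces a morphism of the regraded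
  cokernels. That morphism only depends on the classes of the columns of \<open>A\<close> in \<open>coker Q\<close> at the
  generator grades, i.e. on \<open>f\<close>. As lifts compose and the identity matrix lifts the identity,
  functoriality and invariance under isomorphism follow.\<close>

section \<open>Monotonicity of the merge function\<close>

lemma ctrl_const_le_coordinate_gap:
  fixes G :: "'n::finite \<Rightarrow> nat \<Rightarrow> real"
  assumes K: "\<forall>j. 1 \<le> K j" and k: "k < K i" and k': "k' < K i" and ne: "G i k \<noteq> G i k'"
  shows "ctrl_const G K \<le> ereal \<bar>G i k - G i k'\<bar>"
proof -
  define pt :: "nat \<Rightarrow> real^'n" where "pt l = (\<chi> j. if j = i then G i l else G j 0)" for l
  have pt_grid: "pt l \<in> grid_image G K" if "l < K i" for l
    using that K by (auto simp: grid_image_def pt_def Suc_le_eq)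
  have diff: "pt k - pt k' = (G i k - G i k') *\<^sub>R axis i 1"
    by (simp add: pt_def vec_eq_iff axis_def)
  have "pt k \<noteq> pt k'"
    using ne diff by (auto simp: axis_eq_axis)
  then have "ctrl_const G K \<le> ereal (infnorm (pt k - pt k'))"
    unfolding ctrl_const_def using pt_grid k k' by (intro Inf_lower) blast
  also have "infnorm (pt k - pt k') \<le> \<bar>G i k - G i k'\<bar>"
    unfolding diff infnorm_mul using infnorm_le_norm[of "axis i (1::real)"] by (simp add: mult_left_le)
  finally show ?thesis by simp
qed

lemma grid_coordinate_gap_gt:
  fixes G :: "'n::finite \<Rightarrow> nat \<Rightarrow> real"
  assumes K: "\<forall>j. 1 \<le> K j" and delta: "ereal \<delta> < ctrl_const G K / 2"
    and k: "k < K i" and k': "k' < K i" and ne: "G i k \<noteq> G i k'"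
  shows "2 * \<delta> < \<bar>G i k - G i k'\<bar>"
proof -
  have "ctrl_const G K / 2 \<le> ereal \<bar>G i k - G i k'\<bar> / 2"
    using ctrl_const_le_coordinate_gap[where G = G, OF K k k' ne] by (rule ereal_divide_right_mono) simp
  also have "\<dots> = ereal (\<bar>G i k - G i k'\<bar> / 2)" by simp
  finally have "ereal \<delta> < ereal (\<bar>G i k - G i k'\<bar> / 2)" by (rule less_le_trans[OF delta])
  then show ?thesis by simp
qed

lemma mono_merge_fun:
  fixes G :: "'n::finite \<Rightarrow> nat \<Rightarrow> real"
  assumes sep: "\<And>i k k'. k < K i \<Longrightarrow> k' < K i \<Longrightarrow> G i k \<noteq> G i k' \<Longrightarrow> 2 * \<delta> < \<bar>G i k - G i k'\<bar>"
  shows "mono (merge_fun G K \<delta>)"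
proof (rule monoI, unfold less_eq_vec_def, intro allI)
  fix x y :: "real^'n" and i
  assume "\<forall>i. x $ i \<le> y $ i"
  then have le: "x $ i \<le> y $ i" ..
  define near where "near = (\<lambda>z k. k < K i \<and> G i k - \<delta> \<le> z \<and> z \<le> G i k + \<delta>)"
  have merge: "merge_fun G K \<delta> z $ i =
      (if \<exists>k. near (z $ i) k then G i (SOME k. near (z $ i) k) else z $ i)" for z
    by (auto simp: merge_fun_def near_def)
  have snap: "near z (SOME k. near z k)" if "\<exists>k. near z k" for z
    using someI_ex[OF that] .
  have both: "G i kx \<le> G i ky" if "near (x $ i) kx" "near (y $ i) ky" for kx ky
  proof (rule ccontr)
    assume "\<not> G i kx \<le> G i ky"
    with sep[of kx i ky] that have "2 * \<delta> < G i kx - G i ky" by (auto simp: near_def)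
    with that le show False by (auto simp: near_def)
  qed
  have left: "G i kx \<le> y $ i" if "near (x $ i) kx" "\<not> (\<exists>k. near (y $ i) k)" for kx
    using that le by (force simp: near_def)
  have right: "x $ i \<le> G i ky" if "\<not> (\<exists>k. near (x $ i) k)" "near (y $ i) ky" for ky
    using that le by (force simp: near_def)
  show "merge_fun G K \<delta> x $ i \<le> merge_fun G K \<delta> y $ i"
    unfolding merge using both left right snap le by auto
qed

definition regrade_pres :: "(real^'n \<Rightarrow> real^'n) \<Rightarrow> ('k, 'n::finite) pres \<Rightarrow> ('k, 'n) pres" where
  "regrade_pres m P = P\<lparr>gen_gr := m \<circ> gen_gr P, rel_gr := m \<circ> rel_gr P\<rparr>"

lemma merge_pres_eq_regrade_pres: "merge_pres G K \<delta> = regrade_pres (merge_fun G K \<delta>)"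
  by (simp add: fun_eq_iff merge_pres_def regrade_pres_def)

lemma regrade_pres_simps [simp]:
  "ngen (regrade_pres m P) = ngen P" "nrel (regrade_pres m P) = nrel P"
  "pmat (regrade_pres m P) = pmat P" "gen_gr (regrade_pres m P) = m \<circ> gen_gr P"
  "rel_gr (regrade_pres m P) = m \<circ> rel_gr P"
  by (simp_all add: regrade_pres_def)

lemma fapply_regrade_pres [simp]: "fapply (regrade_pres m P) = fapply P"
  by (simp add: fapply_def fun_eq_iff)

lemma valid_pres_regrade: "mono m \<Longrightarrow> valid_pres P \<Longrightarrow> valid_pres (regrade_pres m P)"
  by (auto simp: valid_pres_def mono_def)

lemma valid_fmap_regrade: "mono m \<Longrightarrow> valid_fmap P Q A \<Longrightarrow> valid_fmap (regrade_pres m P) (regrade_pres m Q) A"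
  by (auto simp: valid_fmap_def mono_def)

lemma Rel_zero: "(\<lambda>i. 0) \<in> Rel P a"
  unfolding Rel_def by (intro CollectI exI[of _ "\<lambda>l. 0"]) simp

lemma Rel_add:
  assumes "x \<in> Rel P a" "y \<in> Rel P a"
  shows "(\<lambda>i. x i + y i) \<in> Rel P a"
proof -
  obtain d e where x: "x = (\<lambda>i. \<Sum>l<nrel P. d l * pmat P i l)"
    and d: "\<forall>l. d l \<noteq> 0 \<longrightarrow> l < nrel P \<and> rel_gr P l \<le> a"
    and y: "y = (\<lambda>i. \<Sum>l<nrel P. e l * pmat P i l)"
    and e: "\<forall>l. e l \<noteq> 0 \<longrightarrow> l < nrel P \<and> rel_gr P l \<le> a"
    using assms unfolding Rel_def by blast
  have "\<forall>l. d l + e l \<noteq> 0 \<longrightarrow> l < nrel P \<and> rel_gr P l \<le> a"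
    using d e by (metis add.right_neutral add_0)
  then show ?thesis unfolding Rel_def
    by (intro CollectI exI[of _ "\<lambda>l. d l + e l"]) (auto simp: x y distrib_right sum.distrib)
qed

lemma Rel_smult:
  assumes "x \<in> Rel P a"
  shows "(\<lambda>i. s * x i) \<in> Rel P a"
proof -
  obtain d where x: "x = (\<lambda>i. \<Sum>l<nrel P. d l * pmat P i l)"
    and d: "\<forall>l. d l \<noteq> 0 \<longrightarrow> l < nrel P \<and> rel_gr P l \<le> a"
    using assms unfolding Rel_def by blast
  then show ?thesis unfolding Rel_def
    by (intro CollectI exI[of _ "\<lambda>l. s * d l"]) (auto simp: x sum_distrib_left mult.assoc)
qed

lemma Rel_diff: "x \<in> Rel P a \<Longrightarrow> y \<in> Rel P a \<Longrightarrow> (\<lambda>i. x i - y i) \<in> Rel P a"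
  using Rel_add[of x P a "\<lambda>i. -1 * y i"] Rel_smult[of y P a "-1"] by simp

lemma Rel_sum:
  "finite T \<Longrightarrow> (\<And>t. t \<in> T \<Longrightarrow> v t \<in> Rel P a) \<Longrightarrow> (\<lambda>i. \<Sum>t\<in>T. v t i) \<in> Rel P a"
proof (induction T rule: finite_induct)
  case empty
  then show ?case using Rel_zero by simp
next
  case (insert t T)
  then show ?case using Rel_add[of "v t" P a "\<lambda>i. \<Sum>t\<in>T. v t i"] by simp
qed

lemma Rel_mono: "a \<le> a' \<Longrightarrow> x \<in> Rel P a \<Longrightarrow> x \<in> Rel P a'"
  unfolding Rel_def using order_trans by blast

lemma Rel_regrade: "mono m \<Longrightarrow> x \<in> Rel P b \<Longrightarrow> x \<in> Rel (regrade_pres m P) (m b)"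
  unfolding Rel_def by (auto simp: mono_def)

text \<open>The single estimate behind both the existence and the uniqueness of induced morphisms.\<close>

lemma Rel_regrade_sum:
  assumes m: "mono m" and T: "finite T"
    and v: "\<And>t. t \<in> T \<Longrightarrow> s t \<noteq> 0 \<Longrightarrow> v t \<in> Rel P (b t) \<and> m (b t) \<le> a"
  shows "(\<lambda>j. \<Sum>t\<in>T. s t * v t j) \<in> Rel (regrade_pres m P) a"
proof (rule Rel_sum[OF T])
  fix t assume t: "t \<in> T"
  show "(\<lambda>j. s t * v t j) \<in> Rel (regrade_pres m P) a"
  proof (cases "s t = 0")
    case True
    then show ?thesis using Rel_zero by simp
  next
    case False
    with v t have "v t \<in> Rel (regrade_pres m P) a"
      using Rel_regrade[OF m] Rel_mono by blast
    then show ?thesis by (rule Rel_smult)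
  qed
qed

lemma mem_cos_iff: "z \<in> cos P a x \<longleftrightarrow> (\<lambda>i. z i - x i) \<in> Rel P a"
  unfolding cos_def by (auto intro!: exI[of _ "\<lambda>i. z i - x i"])

lemma cos_eq_iff: "cos P a x = cos P a y \<longleftrightarrow> (\<lambda>i. x i - y i) \<in> Rel P a"
proof
  assume "cos P a x = cos P a y"
  moreover have "x \<in> cos P a x" using Rel_zero by (simp add: mem_cos_iff)
  ultimately show "(\<lambda>i. x i - y i) \<in> Rel P a" by (simp add: mem_cos_iff)
next
  assume xy: "(\<lambda>i. x i - y i) \<in> Rel P a"
  show "cos P a x = cos P a y"
  proof (intro set_eqI)
    fix z
    show "z \<in> cos P a x \<longleftrightarrow> z \<in> cos P a y"
      unfolding mem_cos_iff
      using Rel_add[OF _ xy, of "\<lambda>i. z i - x i"] Rel_diff[OF _ xy, of "\<lambda>i. z i - y i"] by auto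
  qed
qed

lemma cadd_cos: "cadd P a (cos P a x) (cos P a y) = cos P a (\<lambda>i. x i + y i)"
proof (intro set_eqI iffI)
  fix z assume "z \<in> cadd P a (cos P a x) (cos P a y)"
  then obtain x' y' r where z: "z = (\<lambda>i. x' i + y' i + r i)" and r: "r \<in> Rel P a"
    and x': "(\<lambda>i. x' i - x i) \<in> Rel P a" and y': "(\<lambda>i. y' i - y i) \<in> Rel P a"
    unfolding cadd_def mem_cos_iff by blast
  have "(\<lambda>i. (x' i - x i) + (y' i - y i) + r i) \<in> Rel P a"
    by (intro Rel_add x' y' r)
  then show "z \<in> cos P a (\<lambda>i. x i + y i)"
    by (simp add: mem_cos_iff z algebra_simps)
next
  fix z assume "z \<in> cos P a (\<lambda>i. x i + y i)"
  then have "(\<lambda>i. z i - (x i + y i)) \<in> Rel P a" by (simp add: mem_cos_iff)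
  moreover have "x \<in> cos P a x" "y \<in> cos P a y" using Rel_zero by (simp_all add: mem_cos_iff)
  ultimately show "z \<in> cadd P a (cos P a x) (cos P a y)"
    unfolding cadd_def
    by (intro CollectI exI[of _ x] exI[of _ y] exI[of _ "\<lambda>i. z i - (x i + y i)"] conjI) simp_all
qed

lemma csmult_cos: "csmult P a s (cos P a x) = cos P a (\<lambda>i. s * x i)"
proof (intro set_eqI iffI)
  fix z assume "z \<in> csmult P a s (cos P a x)"
  then obtain x' r where z: "z = (\<lambda>i. s * x' i + r i)" and r: "r \<in> Rel P a"
    and x': "(\<lambda>i. x' i - x i) \<in> Rel P a"
    unfolding csmult_def mem_cos_iff by blast
  have "(\<lambda>i. s * (x' i - x i) + r i) \<in> Rel P a"
    by (intro Rel_add Rel_smult x' r)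
  then show "z \<in> cos P a (\<lambda>i. s * x i)"
    by (simp add: mem_cos_iff z algebra_simps)
next
  fix z assume "z \<in> cos P a (\<lambda>i. s * x i)"
  then have "(\<lambda>i. z i - s * x i) \<in> Rel P a" by (simp add: mem_cos_iff)
  moreover have "x \<in> cos P a x" using Rel_zero by (simp add: mem_cos_iff)
  ultimately show "z \<in> csmult P a s (cos P a x)"
    unfolding csmult_def by (intro CollectI exI[of _ x] exI[of _ "\<lambda>i. z i - s * x i"] conjI) simp_all
qed

lemma cstr_cos:
  assumes "a \<le> a'"
  shows "cstr P a' (cos P a x) = cos P a' x"
proof (intro set_eqI iffI)
  fix z assume "z \<in> cstr P a' (cos P a x)"
  then obtain x' r where z: "z = (\<lambda>i. x' i + r i)" and r: "r \<in> Rel P a'"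
    and x': "(\<lambda>i. x' i - x i) \<in> Rel P a"
    unfolding cstr_def mem_cos_iff by blast
  have "(\<lambda>i. (x' i - x i) + r i) \<in> Rel P a'"
    by (intro Rel_add Rel_mono[OF assms x'] r)
  then show "z \<in> cos P a' x"
    by (simp add: mem_cos_iff z algebra_simps)
next
  fix z assume "z \<in> cos P a' x"
  then have "(\<lambda>i. z i - x i) \<in> Rel P a'" by (simp add: mem_cos_iff)
  moreover have "x \<in> cos P a x" using Rel_zero by (simp add: mem_cos_iff)
  ultimately show "z \<in> cstr P a' (cos P a x)"
    unfolding cstr_def by (intro CollectI exI[of _ x] exI[of _ "\<lambda>i. z i - x i"] conjI) simp_all
qed

lemma cos_in_Mod: "c \<in> F0 P a \<Longrightarrow> cos P a c \<in> Mod P a"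
  unfolding Mod_def by blast

lemma F0_zero: "(\<lambda>i. 0) \<in> F0 P a"
  unfolding F0_def by simp

lemma F0_add:
  assumes "x \<in> F0 P a" "y \<in> F0 P a"
  shows "(\<lambda>i. x i + y i) \<in> F0 P a"
proof -
  have "i < ngen P \<and> gen_gr P i \<le> a" if "x i + y i \<noteq> 0" for i
    using that assms unfolding F0_def by (cases "x i = 0") auto
  then show ?thesis unfolding F0_def by blast
qed

lemma F0_smult: "x \<in> F0 P a \<Longrightarrow> (\<lambda>i. s * x i) \<in> F0 P a"
  unfolding F0_def by auto

lemma F0_mono: "a \<le> a' \<Longrightarrow> x \<in> F0 P a \<Longrightarrow> x \<in> F0 P a'"
  unfolding F0_def using order_trans by blast

definition unit_vec :: "nat \<Rightarrow> nat \<Rightarrow> 'k::field" where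
  "unit_vec i = (\<lambda>j. if j = i then 1 else 0)"

lemma unit_vec_mult: "unit_vec i j * x = (if j = i then x else 0)"
  by (simp add: unit_vec_def)

lemma unit_vec_F0: "i < ngen P \<Longrightarrow> unit_vec i \<in> F0 P (gen_gr P i)"
  unfolding F0_def unit_vec_def by auto

lemma fapply_add: "fapply P A (\<lambda>i. x i + y i) = (\<lambda>j. fapply P A x j + fapply P A y j)"
  unfolding fapply_def by (simp add: distrib_left sum.distrib)

lemma fapply_smult: "fapply P A (\<lambda>i. s * x i) = (\<lambda>j. s * fapply P A x j)"
  unfolding fapply_def by (simp add: sum_distrib_left mult.left_commute)

lemma fapply_diff: "fapply P A (\<lambda>i. x i - y i) = (\<lambda>j. fapply P A x j - fapply P A y j)"
  unfolding fapply_def by (simp add: right_diff_distrib sum_subtractf)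

lemma fapply_unit_vec: "i < ngen P \<Longrightarrow> fapply P A (unit_vec i) = (\<lambda>j. A j i)"
  unfolding fapply_def unit_vec_def by (simp add: if_distrib cong: if_cong)

lemma fapply_F0:
  assumes A: "valid_fmap P Q A" and c: "c \<in> F0 P a"
  shows "fapply P A c \<in> F0 Q a"
  unfolding F0_def
proof (intro CollectI allI impI)
  fix j assume "fapply P A c j \<noteq> 0"
  then obtain i where "A j i * c i \<noteq> 0"
    unfolding fapply_def by (rule sum.not_neutral_contains_not_neutral)
  with A c have "j < ngen Q" "gen_gr Q j \<le> gen_gr P i" "gen_gr P i \<le> a"
    unfolding valid_fmap_def F0_def by auto
  then show "j < ngen Q \<and> gen_gr Q j \<le> a" by (meson order_trans)
qed

definition fmap_id :: "('k::field, 'n::finite) pres \<Rightarrow> nat \<Rightarrow> nat \<Rightarrow> 'k" where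
  "fmap_id P j i = (if i < ngen P then unit_vec i j else 0)"

definition fmap_comp :: "('k::field, 'n::finite) pres \<Rightarrow> (nat \<Rightarrow> nat \<Rightarrow> 'k) \<Rightarrow> (nat \<Rightarrow> nat \<Rightarrow> 'k)
    \<Rightarrow> nat \<Rightarrow> nat \<Rightarrow> 'k" where
  "fmap_comp Q B A j i = (\<Sum>k<ngen Q. B j k * A k i)"

lemma valid_fmap_id: "valid_fmap P P (fmap_id P)"
  unfolding valid_fmap_def fmap_id_def unit_vec_def by simp

lemma fapply_fmap_id:
  assumes c: "c \<in> F0 P a"
  shows "fapply P (fmap_id P) c = c"
proof
  fix j
  have "fapply P (fmap_id P) c j = (\<Sum>i<ngen P. if j = i then c i else 0)"
    unfolding fapply_def fmap_id_def unit_vec_def by (intro sum.cong) auto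
  also have "\<dots> = c j"
    using c unfolding F0_def by auto
  finally show "fapply P (fmap_id P) c j = c j" .
qed

lemma valid_fmap_comp:
  assumes A: "valid_fmap P Q A" and B: "valid_fmap Q R B"
  shows "valid_fmap P R (fmap_comp Q B A)"
  unfolding valid_fmap_def
proof (intro allI impI)
  fix j i assume "fmap_comp Q B A j i \<noteq> 0"
  then obtain k where "B j k * A k i \<noteq> 0"
    unfolding fmap_comp_def by (rule sum.not_neutral_contains_not_neutral)
  with A B have "j < ngen R" "i < ngen P" "gen_gr R j \<le> gen_gr Q k" "gen_gr Q k \<le> gen_gr P i"
    unfolding valid_fmap_def by auto
  then show "j < ngen R \<and> i < ngen P \<and> gen_gr R j \<le> gen_gr P i" by (meson order_trans)
qed

lemma fapply_fmap_comp: "fapply P (fmap_comp Q B A) x = fapply Q B (fapply P A x)"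
proof
  fix j
  have "fapply P (fmap_comp Q B A) x j = (\<Sum>i<ngen P. \<Sum>k<ngen Q. B j k * (A k i * x i))"
    by (simp add: fapply_def fmap_comp_def sum_distrib_right mult.assoc)
  also have "\<dots> = fapply Q B (fapply P A x) j"
    by (subst sum.swap) (simp add: fapply_def sum_distrib_left)
  finally show "fapply P (fmap_comp Q B A) x j = fapply Q B (fapply P A x) j" .
qed

lemma pmorI:
  assumes "\<And>a c. c \<in> F0 P a \<Longrightarrow> f a (cos P a c) \<in> Mod Q a"
    and "\<And>a c d. c \<in> F0 P a \<Longrightarrow> d \<in> F0 P a \<Longrightarrow>
      f a (cos P a (\<lambda>i. c i + d i)) = cadd Q a (f a (cos P a c)) (f a (cos P a d))"
    and "\<And>a s c. c \<in> F0 P a \<Longrightarrow> f a (cos P a (\<lambda>i. s * c i)) = csmult Q a s (f a (cos P a c))"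
    and "\<And>a a' c. a \<le> a' \<Longrightarrow> c \<in> F0 P a \<Longrightarrow> f a' (cos P a' c) = cstr Q a' (f a (cos P a c))"
  shows "pmor P Q f"
  unfolding pmor_def Mod_def
  using assms F0_add F0_smult F0_mono by (auto simp: cadd_cos csmult_cos cstr_cos Mod_def)

lemma pmor_id: "pmor P P (\<lambda>a X. X)"
  unfolding pmor_def by simp

lemma pmor_comp:
  assumes f: "pmor P Q f" and h: "pmor Q R h"
  shows "pmor P R (\<lambda>a X. h a (f a X))"
  unfolding pmor_def
proof (intro conjI allI ballI impI)
  fix a X assume X: "X \<in> Mod P a"
  then have fX: "f a X \<in> Mod Q a" using f unfolding pmor_def by blast
  then show "h a (f a X) \<in> Mod R a" using h unfolding pmor_def by blast
  show "h a (f a (csmult P a s X)) = csmult R a s (h a (f a X))" for s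
    using f h X fX unfolding pmor_def by simp
  fix Y assume Y: "Y \<in> Mod P a"
  then have "f a Y \<in> Mod Q a" using f unfolding pmor_def by blast
  then show "h a (f a (cadd P a X Y)) = cadd R a (h a (f a X)) (h a (f a Y))"
    using f h X Y fX unfolding pmor_def by simp
next
  fix a a' X assume le: "a \<le> a'" and X: "X \<in> Mod P a"
  then have "f a X \<in> Mod Q a" using f unfolding pmor_def by blast
  then show "h a' (f a' (cstr P a' X)) = cstr R a' (h a (f a X))"
    using f h X le unfolding pmor_def by simp
qed

lemma pmor_cos_add:
  assumes f: "pmor P Q f" and c: "c \<in> F0 P a" and d: "d \<in> F0 P a"
  shows "f a (cos P a (\<lambda>i. c i + d i)) = cadd Q a (f a (cos P a c)) (f a (cos P a d))"
proof -
  have "f a (cadd P a (cos P a c) (cos P a d)) = cadd Q a (f a (cos P a c)) (f a (cos P a d))"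
    using f cos_in_Mod[OF c] cos_in_Mod[OF d] unfolding pmor_def by blast
  then show ?thesis by (simp add: cadd_cos)
qed

lemma pmor_cos_smult:
  assumes f: "pmor P Q f" and c: "c \<in> F0 P a"
  shows "f a (cos P a (\<lambda>i. s * c i)) = csmult Q a s (f a (cos P a c))"
proof -
  have "f a (csmult P a s (cos P a c)) = csmult Q a s (f a (cos P a c))"
    using f cos_in_Mod[OF c] unfolding pmor_def by blast
  then show ?thesis by (simp add: csmult_cos)
qed

lemma pmor_cos_mono:
  assumes f: "pmor P Q f" and le: "a \<le> a'" and c: "c \<in> F0 P a"
  shows "f a' (cos P a' c) = cstr Q a' (f a (cos P a c))"
proof -
  have "f a' (cstr P a' (cos P a c)) = cstr Q a' (f a (cos P a c))"
    using f le cos_in_Mod[OF c] unfolding pmor_def by blast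
  then show ?thesis by (simp add: cstr_cos[OF le])
qed

lemma pmor_cos_zero:
  assumes f: "pmor P Q f"
  shows "f a (cos P a (\<lambda>i. 0)) = cos Q a (\<lambda>i. 0)"
proof -
  have "f a (cos P a (\<lambda>i. 0)) \<in> Mod Q a"
    using f cos_in_Mod[OF F0_zero] unfolding pmor_def by blast
  then obtain y where y: "f a (cos P a (\<lambda>i. 0)) = cos Q a y"
    unfolding Mod_def by blast
  have "f a (cos P a (\<lambda>i. 0)) = csmult Q a 0 (f a (cos P a (\<lambda>i. 0)))"
    using pmor_cos_smult[OF f F0_zero, of a 0] by simp
  also have "\<dots> = cos Q a (\<lambda>i. 0)"
    by (simp add: y csmult_cos)
  finally show ?thesis .
qed

lemma pmor_cos_eq_fapply:
  assumes f: "pmor P Q f"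
    and gen: "\<And>i. i < ngen P \<Longrightarrow>
      f (gen_gr P i) (cos P (gen_gr P i) (unit_vec i)) = cos Q (gen_gr P i) (\<lambda>j. A j i)"
    and c: "c \<in> F0 P a"
  shows "f a (cos P a c) = cos Q a (fapply P A c)"
proof -
  define trunc where "trunc k = (\<lambda>j. if j < k then c j else 0)" for k
  have trunc_F0: "trunc k \<in> F0 P a" for k
    using c unfolding F0_def trunc_def by auto
  have term_F0: "(\<lambda>j. c k * unit_vec k j) \<in> F0 P a" for k
    using c unfolding F0_def unit_vec_def by auto
  have summand: "f a (cos P a (\<lambda>j. c k * unit_vec k j)) = cos Q a (fapply P A (\<lambda>j. c k * unit_vec k j))" for k
  proof (cases "c k = 0")
    case True
    then show ?thesis using pmor_cos_zero[OF f] by (simp add: fapply_def)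
  next
    case False
    then have k: "k < ngen P" and le: "gen_gr P k \<le> a" using c unfolding F0_def by auto
    have "f a (cos P a (unit_vec k)) = cos Q a (\<lambda>j. A j k)"
      using pmor_cos_mono[OF f le unit_vec_F0[OF k]] gen[OF k] cstr_cos[OF le] by simp
    then show ?thesis
      using pmor_cos_smult[OF f F0_mono[OF le unit_vec_F0[OF k]]]
      by (simp add: csmult_cos fapply_smult fapply_unit_vec[OF k])
  qed
  have "f a (cos P a (trunc k)) = cos Q a (fapply P A (trunc k))" for k
  proof (induction k)
    case 0
    then show ?case using pmor_cos_zero[OF f] by (simp add: trunc_def fapply_def)
  next
    case (Suc k)
    have trunc_Suc: "trunc (Suc k) = (\<lambda>j. trunc k j + c k * unit_vec k j)"
      by (auto simp: trunc_def unit_vec_def fun_eq_iff less_Suc_eq)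
    show ?case
      unfolding trunc_Suc pmor_cos_add[OF f trunc_F0 term_F0] Suc summand
      by (simp add: cadd_cos fapply_add)
  qed
  moreover have "trunc (ngen P) = c"
    using c unfolding trunc_def F0_def by (auto simp: fun_eq_iff)
  ultimately show ?thesis by metis
qed

lemma lift_exists:
  assumes f: "pmor P Q f"
  shows "\<exists>A. is_lift P Q f A"
proof -
  have "\<exists>y. i < ngen P \<longrightarrow> y \<in> F0 Q (gen_gr P i) \<and>
      f (gen_gr P i) (cos P (gen_gr P i) (unit_vec i)) = cos Q (gen_gr P i) y" for i
  proof (cases "i < ngen P")
    case True
    then have "f (gen_gr P i) (cos P (gen_gr P i) (unit_vec i)) \<in> Mod Q (gen_gr P i)"
      using f cos_in_Mod[OF unit_vec_F0] unfolding pmor_def by blast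
    then show ?thesis unfolding Mod_def image_iff by blast
  qed simp
  then obtain y where y: "\<And>i. i < ngen P \<Longrightarrow> y i \<in> F0 Q (gen_gr P i) \<and>
      f (gen_gr P i) (cos P (gen_gr P i) (unit_vec i)) = cos Q (gen_gr P i) (y i)"
    by metis
  define A where "A j i = (if i < ngen P then y i j else 0)" for j i
  have "valid_fmap P Q A"
    using y unfolding valid_fmap_def A_def F0_def by auto
  moreover have "f a (cos P a c) = cos Q a (fapply P A c)" if "c \<in> F0 P a" for a c
    by (rule pmor_cos_eq_fapply[OF f _ that]) (simp add: y A_def)
  ultimately show ?thesis unfolding is_lift_def by blast
qed

lemma lift_unit_vec:
  assumes A: "is_lift P Q f A" and i: "i < ngen P"
  shows "f (gen_gr P i) (cos P (gen_gr P i) (unit_vec i)) = cos Q (gen_gr P i) (\<lambda>j. A j i)"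
proof -
  have "f (gen_gr P i) (cos P (gen_gr P i) (unit_vec i)) = cos Q (gen_gr P i) (fapply P A (unit_vec i))"
    using A unit_vec_F0[OF i] unfolding is_lift_def by blast
  then show ?thesis by (simp add: fapply_unit_vec[OF i])
qed

lemma is_lift_id: "is_lift P P (\<lambda>a X. X) (fmap_id P)"
  unfolding is_lift_def by (simp add: valid_fmap_id fapply_fmap_id)

lemma is_lift_comp:
  assumes A: "is_lift P Q f A" and B: "is_lift Q R h B"
  shows "is_lift P R (\<lambda>a X. h a (f a X)) (fmap_comp Q B A)"
proof -
  have vA: "valid_fmap P Q A" and vB: "valid_fmap Q R B"
    using A B unfolding is_lift_def by auto
  have "h a (f a (cos P a c)) = cos R a (fapply P (fmap_comp Q B A) c)" if c: "c \<in> F0 P a" for a c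
    using A B fapply_F0[OF vA c] c unfolding is_lift_def by (simp add: fapply_fmap_comp)
  then show ?thesis unfolding is_lift_def using valid_fmap_comp[OF vA vB] by blast
qed

lemma is_lift_cong:
  assumes eq: "mor_eq P f f'" and A: "is_lift P Q f A"
  shows "is_lift P Q f' A"
  unfolding is_lift_def
proof (intro conjI allI ballI)
  show "valid_fmap P Q A" using A unfolding is_lift_def by blast
  fix a c assume c: "c \<in> F0 P a"
  have "f a (cos P a c) = f' a (cos P a c)"
    using eq cos_in_Mod[OF c] unfolding mor_eq_def by blast
  then show "f' a (cos P a c) = cos Q a (fapply P A c)"
    using A c unfolding is_lift_def by simp
qed

section \<open>Induced morphisms of regraded cokernels\<close>

lemma fmap_id_regrade [simp]: "fmap_id (regrade_pres m P) = fmap_id P"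
  by (simp add: fun_eq_iff fmap_id_def)

lemma fmap_comp_regrade [simp]: "fmap_comp (regrade_pres m Q) = fmap_comp Q"
  by (simp add: fun_eq_iff fmap_comp_def)

lemma induced_by_id: "induced_by P P (fmap_id P) (\<lambda>a X. X)"
  unfolding induced_by_def by (simp add: pmor_id fapply_fmap_id)

lemma induced_by_comp:
  assumes A: "valid_fmap P Q A" and g1: "induced_by P Q A g1" and g2: "induced_by Q R B g2"
  shows "induced_by P R (fmap_comp Q B A) (\<lambda>a X. g2 a (g1 a X))"
proof -
  have "pmor P R (\<lambda>a X. g2 a (g1 a X))"
    using g1 g2 pmor_comp unfolding induced_by_def by blast
  moreover have "g2 a (g1 a (cos P a c)) = cos R a (fapply P (fmap_comp Q B A) c)" if "c \<in> F0 P a" for a c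
    using g1 g2 that fapply_F0[OF A that] unfolding induced_by_def by (simp add: fapply_fmap_comp)
  ultimately show ?thesis unfolding induced_by_def by blast
qed

lemma induced_by_exists:
  assumes A: "valid_fmap P Q A"
    and Rel: "\<And>a x. x \<in> Rel P a \<Longrightarrow> fapply P A x \<in> Rel Q a"
  shows "\<exists>g. induced_by P Q A g"
proof -
  define g where "g a X = cos Q a (fapply P A (SOME c. c \<in> F0 P a \<and> X = cos P a c))" for a X
  have g_cos: "g a (cos P a c) = cos Q a (fapply P A c)" if c: "c \<in> F0 P a" for a c
  proof -
    define c' where "c' = (SOME c'. c' \<in> F0 P a \<and> cos P a c = cos P a c')"
    have "c' \<in> F0 P a \<and> cos P a c = cos P a c'"
      unfolding c'_def by (rule someI[of _ c]) (simp add: c)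
    then have "fapply P A (\<lambda>i. c i - c' i) \<in> Rel Q a"
      by (intro Rel) (simp add: cos_eq_iff)
    then have "cos Q a (fapply P A c) = cos Q a (fapply P A c')"
      by (simp add: cos_eq_iff fapply_diff)
    then show ?thesis by (simp add: g_def c'_def)
  qed
  have "pmor P Q g"
    by (rule pmorI) (simp_all add: g_cos fapply_F0[OF A] cos_in_Mod F0_add F0_smult F0_mono
        cadd_cos csmult_cos cstr_cos fapply_add fapply_smult)
  then show ?thesis unfolding induced_by_def using g_cos by blast
qed

lemma lift_maps_relations:
  assumes P: "valid_pres P" and A: "is_lift P Q f A" and l: "l < nrel P"
  shows "fapply P A (\<lambda>i. pmat P i l) \<in> Rel Q (rel_gr P l)"
proof -
  let ?r = "rel_gr P l"
  have "(\<lambda>i. pmat P i l) = (\<lambda>i. \<Sum>l'<nrel P. unit_vec l l' * pmat P i l')"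
    using l by (simp add: unit_vec_mult fun_eq_iff)
  moreover have "\<forall>l'. unit_vec l l' \<noteq> (0::'a) \<longrightarrow> l' < nrel P \<and> rel_gr P l' \<le> ?r"
    using l by (simp add: unit_vec_def)
  ultimately have rel: "(\<lambda>i. pmat P i l) \<in> Rel P ?r"
    unfolding Rel_def by blast
  have F0: "(\<lambda>i. pmat P i l) \<in> F0 P ?r"
    using P unfolding valid_pres_def F0_def by blast
  have "cos Q ?r (fapply P A (\<lambda>i. pmat P i l)) = f ?r (cos P ?r (\<lambda>i. pmat P i l))"
    using A F0 unfolding is_lift_def by simp
  also have "\<dots> = f ?r (cos P ?r (\<lambda>i. 0))"
    using rel cos_eq_iff[of P ?r "\<lambda>i. pmat P i l" "\<lambda>i. 0"] by simp
  also have "\<dots> = cos Q ?r (fapply P A (\<lambda>i. 0))"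
    using A F0_zero unfolding is_lift_def by blast
  finally show ?thesis by (simp add: cos_eq_iff fapply_def)
qed

lemma lift_maps_Rel_regrade:
  assumes m: "mono m" and P: "valid_pres P" and A: "is_lift P Q f A"
    and x: "x \<in> Rel (regrade_pres m P) a"
  shows "fapply P A x \<in> Rel (regrade_pres m Q) a"
proof -
  obtain d where x_eq: "x = (\<lambda>i. \<Sum>l<nrel P. d l * pmat P i l)"
    and d: "\<forall>l. d l \<noteq> 0 \<longrightarrow> l < nrel P \<and> m (rel_gr P l) \<le> a"
    using x unfolding Rel_def by auto
  have "fapply P A x = (\<lambda>j. \<Sum>l<nrel P. d l * fapply P A (\<lambda>i. pmat P i l) j)"
  proof
    fix j
    have "fapply P A x j = (\<Sum>i<ngen P. \<Sum>l<nrel P. A j i * (d l * pmat P i l))"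
      by (simp add: x_eq fapply_def sum_distrib_left)
    also have "\<dots> = (\<Sum>l<nrel P. d l * fapply P A (\<lambda>i. pmat P i l) j)"
      by (subst sum.swap) (simp add: fapply_def sum_distrib_left mult.left_commute)
    finally show "fapply P A x j = (\<Sum>l<nrel P. d l * fapply P A (\<lambda>i. pmat P i l) j)" .
  qed
  moreover have "(\<lambda>j. \<Sum>l<nrel P. d l * fapply P A (\<lambda>i. pmat P i l) j) \<in> Rel (regrade_pres m Q) a"
    by (rule Rel_regrade_sum[OF m]) (use d lift_maps_relations[OF P A] in auto)
  ultimately show ?thesis by simp
qed

lemma lift_valid_fmap_regrade:
  "mono m \<Longrightarrow> is_lift P Q f A \<Longrightarrow> valid_fmap (regrade_pres m P) (regrade_pres m Q) A"
  unfolding is_lift_def by (simp add: valid_fmap_regrade)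

lemma regrade_induced_exists:
  assumes m: "mono m" and P: "valid_pres P" and A: "is_lift P Q f A"
  shows "\<exists>g. induced_by (regrade_pres m P) (regrade_pres m Q) A g"
  by (rule induced_by_exists[OF lift_valid_fmap_regrade[OF m A]]) (simp add: lift_maps_Rel_regrade[OF m P A])

lemma regrade_induced_unique:
  assumes m: "mono m" and A: "is_lift P Q f A" and A': "is_lift P Q f A'"
    and g: "induced_by (regrade_pres m P) (regrade_pres m Q) A g"
    and g': "induced_by (regrade_pres m P) (regrade_pres m Q) A' g'"
  shows "mor_eq (regrade_pres m P) g g'"
  unfolding mor_eq_def
proof (intro allI ballI)
  fix a X assume "X \<in> Mod (regrade_pres m P) a"
  then obtain c where c: "c \<in> F0 (regrade_pres m P) a" and X: "X = cos (regrade_pres m P) a c"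
    unfolding Mod_def by blast
  have col: "(\<lambda>j. A j i - A' j i) \<in> Rel Q (gen_gr P i)" if "i < ngen P" for i
  proof -
    have "cos Q (gen_gr P i) (\<lambda>j. A j i) = cos Q (gen_gr P i) (\<lambda>j. A' j i)"
      using lift_unit_vec[OF A that] lift_unit_vec[OF A' that] by simp
    then show ?thesis by (simp add: cos_eq_iff)
  qed
  have "(\<lambda>j. \<Sum>i<ngen P. c i * (A j i - A' j i)) \<in> Rel (regrade_pres m Q) a"
    by (rule Rel_regrade_sum[OF m]) (use c col in \<open>auto simp: F0_def\<close>)
  moreover have "(\<lambda>j. fapply P A c j - fapply P A' c j) = (\<lambda>j. \<Sum>i<ngen P. c i * (A j i - A' j i))"
    by (simp add: fun_eq_iff fapply_def sum_subtractf[symmetric] algebra_simps)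
  ultimately have "cos (regrade_pres m Q) a (fapply P A c) = cos (regrade_pres m Q) a (fapply P A' c)"
    by (simp add: cos_eq_iff)
  then show "g a X = g' a X"
    using g g' c unfolding X induced_by_def by simp
qed

lemma regrade_induced_id:
  assumes m: "mono m" and A: "is_lift P P (\<lambda>a X. X) A"
    and g: "induced_by (regrade_pres m P) (regrade_pres m P) A g"
  shows "mor_eq (regrade_pres m P) g (\<lambda>a X. X)"
  using regrade_induced_unique[OF m A is_lift_id g] induced_by_id[of "regrade_pres m P"] by simp

lemma regrade_induced_comp:
  assumes m: "mono m" and A: "is_lift P Q f A" and B: "is_lift Q R h B"
    and C: "is_lift P R (\<lambda>a X. h a (f a X)) C"
    and g1: "induced_by (regrade_pres m P) (regrade_pres m Q) A g1"
    and g2: "induced_by (regrade_pres m Q) (regrade_pres m R) B g2"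
    and g3: "induced_by (regrade_pres m P) (regrade_pres m R) C g3"
  shows "mor_eq (regrade_pres m P) g3 (\<lambda>a X. g2 a (g1 a X))"
  using regrade_induced_unique[OF m C is_lift_comp[OF A B] g3]
    induced_by_comp[OF lift_valid_fmap_regrade[OF m A] g1 g2] by simp

lemma regrade_induced_inverse:
  assumes m: "mono m" and A: "is_lift P Q f A" and B: "is_lift Q P h B"
    and hf: "mor_eq P (\<lambda>a X. h a (f a X)) (\<lambda>a X. X)"
    and F: "induced_by (regrade_pres m P) (regrade_pres m Q) A F"
    and H: "induced_by (regrade_pres m Q) (regrade_pres m P) B H"
  shows "mor_eq (regrade_pres m P) (\<lambda>a X. H a (F a X)) (\<lambda>a X. X)"
proof (rule regrade_induced_unique[OF m])
  show "is_lift P P (\<lambda>a X. X) (fmap_comp Q B A)"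
    by (rule is_lift_cong[OF hf is_lift_comp[OF A B]])
  show "is_lift P P (\<lambda>a X. X) (fmap_id P)"
    by (rule is_lift_id)
  show "induced_by (regrade_pres m P) (regrade_pres m P) (fmap_comp Q B A) (\<lambda>a X. H a (F a X))"
    using induced_by_comp[OF lift_valid_fmap_regrade[OF m A] F H] by simp
  show "induced_by (regrade_pres m P) (regrade_pres m P) (fmap_id P) (\<lambda>a X. X)"
    using induced_by_id[of "regrade_pres m P"] by simp
qed

lemma regrade_mod_iso:
  assumes m: "mono m" and P: "valid_pres P" and Q: "valid_pres Q" and iso: "mod_iso P Q"
  shows "mod_iso (regrade_pres m P) (regrade_pres m Q)"
proof -
  obtain f h where f: "pmor P Q f" and h: "pmor Q P h"
    and hf: "mor_eq P (\<lambda>a X. h a (f a X)) (\<lambda>a X. X)" and fh: "mor_eq Q (\<lambda>a X. f a (h a X)) (\<lambda>a X. X)"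
    using iso unfolding mod_iso_def by blast
  obtain A B where A: "is_lift P Q f A" and B: "is_lift Q P h B"
    using lift_exists[OF f] lift_exists[OF h] by blast
  obtain F H where F: "induced_by (regrade_pres m P) (regrade_pres m Q) A F"
    and H: "induced_by (regrade_pres m Q) (regrade_pres m P) B H"
    using regrade_induced_exists[OF m P A] regrade_induced_exists[OF m Q B] by blast
  show ?thesis
    unfolding mod_iso_def
    using F H regrade_induced_inverse[OF m A B hf F H] regrade_induced_inverse[OF m B A fh H F]
    unfolding induced_by_def by blast
qed

theorem mainTheorem6:
  fixes G :: "'n::finite \<Rightarrow> nat \<Rightarrow> real" and K :: "'n \<Rightarrow> nat" and \<delta> :: real
  assumes grid: "\<forall>i. 1 \<le> K i"
    and delta: "ereal \<delta> < ctrl_const G K / 2"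
  defines "MP \<equiv> merge_pres G K \<delta>"
  shows
    \<comment> \<open>merging a finite presentation gives a finite presentation\<close>
    "(\<forall>P::('k::field, 'n) pres. valid_pres P \<longrightarrow> valid_pres (MP P))
     \<comment> \<open>independence of the presentation, up to isomorphism\<close>
   \<and> (\<forall>P Q::('k, 'n) pres. valid_pres P \<longrightarrow> valid_pres Q \<longrightarrow> mod_iso P Q \<longrightarrow>
        mod_iso (MP P) (MP Q))
     \<comment> \<open>every morphism has a lift, and every lift induces a morphism of merged cokernels\<close>
   \<and> (\<forall>P Q::('k, 'n) pres. \<forall>f. valid_pres P \<longrightarrow> valid_pres Q \<longrightarrow> pmor P Q f \<longrightarrow>
        (\<exists>A. is_lift P Q f A) \<and>
        (\<forall>A. is_lift P Q f A \<longrightarrow> (\<exists>g. induced_by (MP P) (MP Q) A g)))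
     \<comment> \<open>the induced morphism does not depend on the chosen lift\<close>
   \<and> (\<forall>P Q::('k, 'n) pres. \<forall>f A A' g g'. valid_pres P \<longrightarrow> valid_pres Q \<longrightarrow> pmor P Q f \<longrightarrow>
        is_lift P Q f A \<longrightarrow> is_lift P Q f A' \<longrightarrow>
        induced_by (MP P) (MP Q) A g \<longrightarrow> induced_by (MP P) (MP Q) A' g' \<longrightarrow>
        mor_eq (MP P) g g')
     \<comment> \<open>functoriality: identities\<close>
   \<and> (\<forall>P::('k, 'n) pres. \<forall>A g. valid_pres P \<longrightarrow> is_lift P P (\<lambda>a X. X) A \<longrightarrow>
        induced_by (MP P) (MP P) A g \<longrightarrow> mor_eq (MP P) g (\<lambda>a X. X))
     \<comment> \<open>functoriality: composition\<close>
   \<and> (\<forall>P Q R::('k, 'n) pres. \<forall>f h A B C g1 g2 g3.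
        valid_pres P \<longrightarrow> valid_pres Q \<longrightarrow> valid_pres R \<longrightarrow> pmor P Q f \<longrightarrow> pmor Q R h \<longrightarrow>
        is_lift P Q f A \<longrightarrow> is_lift Q R h B \<longrightarrow> is_lift P R (\<lambda>a X. h a (f a X)) C \<longrightarrow>
        induced_by (MP P) (MP Q) A g1 \<longrightarrow> induced_by (MP Q) (MP R) B g2 \<longrightarrow>
        induced_by (MP P) (MP R) C g3 \<longrightarrow>
        mor_eq (MP P) g3 (\<lambda>a X. g2 a (g1 a X)))"
proof -
  define m where "m = merge_fun G K \<delta>"
  have m: "mono m"
    unfolding m_def by (rule mono_merge_fun) (rule grid_coordinate_gap_gt[OF grid delta])
  have MP: "MP = regrade_pres m"
    unfolding MP_def m_def by (rule merge_pres_eq_regrade_pres)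
  show ?thesis
    unfolding MP
    by (intro conjI allI impI; rule valid_pres_regrade[OF m] regrade_mod_iso[OF m] lift_exists
        regrade_induced_exists[OF m] regrade_induced_id[OF m] regrade_induced_comp[OF m]
        regrade_induced_unique[OF m]; assumption)
qed

end
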